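(* Let $\mathcal{N}=\{1,\dots,N\}$ and let $u:2^{\mathcal{N}}\times\Delta\to\mathbb{R}$ be an uncertain value function, where the value $u(\mathcal{N})$ of the grand coalition does not depend on $\delta$. Let $\delta_K=\{\delta^{(1)},\dots,\delta^{(K)}\}$ be $K$ i.i.d. samples drawn from $\Delta$ according to $\mathbb{P}$, and assume that for every multi-sample $\delta_K\in\Delta^K$ the scenario core $C(G_K)$ is non-empty. Fix a confidence parameter $\beta\in(0,1)$ and let $\epsilon:\{0,\dots,K\}\to[0,1]$ be any function such that $$\epsilon(K)=1\quad\text{and}\quad \sum_{s=0}^{K-1}\binom{K}{s}(1-\epsilon(s))^{K-s}=\beta .$$ Then $$\mathbb{P}^K\left\{\delta_K\in\Delta^K \;\middle|\; \mathbb{V}(C(G_K))>\epsilon(s_K)\right\}\le\beta,$$ where $\mathbb{P}^K=\prod_{k=1}^K\mathbb{P}$ and $s_K$ is the cardinality of a minimal compression set of the algorithm $A$ for the multi-sample $\delta_K$.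
   Context: An uncertain cooperative game has agents $\mathcal{N}=\{1,\dots,N\}$, an uncertain parameter $\delta$ taking values in a set $\Delta$ according to a (fixed, possibly unknown) probability distribution $\mathbb{P}$, and a value function $u:2^{\mathcal{N}}\times\Delta\to\mathbb{R}$; an allocation is a vector $\boldsymbol{x}=(x_1,\dots,x_N)\in\mathbb{R}^N$. Given samples $\delta_K=\{\delta^{(1)},\dots,\delta^{(K)}\}$, the scenario core is $$C(G_K)=\Big\{\boldsymbol{x}\in\mathbb{R}^N \,\Big|\, \textstyle\sum_{i\in\mathcal{N}}x_i=u(\mathcal{N}),\ \sum_{i\in S}x_i\ge \max_{k=1,\dots,K}u(S,\delta^{(k)})\ \text{for all } S\subsetneq\mathcal{N}\Big\}.$$ The probability of core instability of the scenario core is $$\mathbb{V}(C(G_K))=\mathbb{P}\Big\{\delta\in\Delta \,\Big|\, \exists\,\boldsymbol{x}\in C(G_K),\ \exists\, S\subsetneq\mathcal{N}:\ \textstyle\sum_{i\in S}x_i<u(S,\delta)\Big\}.$$ The algorithm $A$ is the map taking a finite collection of samples to the scenario core built from those samples; in particular $A(\delta_K)=C(G_K)$. A subset $I\subseteq\delta_K$ is a compression set if $A(I)=A(\delta_K)$ (i.e., the scenario core built from the samples in $I$ alone equals $C(G_K)$); a minimal compression set is a compression set of minimal cardinality. *)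

theory Defs
  imports "HOL-Probability.Probability"
begin

text \<open>Agents are \<open>{1..N}\<close>; coalitions are subsets of \<open>{1..N}\<close>; an allocation is a
  function \<open>x :: nat \<Rightarrow> real\<close> (only its values on \<open>{1..N}\<close> matter).
  \<open>vN\<close> is the (deterministic) value \<open>u(\<N>)\<close> of the grand coalition.
  A finite collection of samples is represented by the set \<open>D\<close> of its values.\<close>

definition scenario_core ::
  "nat \<Rightarrow> (nat set \<Rightarrow> 'd \<Rightarrow> real) \<Rightarrow> real \<Rightarrow> 'd set \<Rightarrow> (nat \<Rightarrow> real) set" where
  "scenario_core N u vN D =
     {x. (\<Sum>i\<in>{1..N}. x i) = vN \<and>
         (\<forall>S. S \<subset> {1..N} \<longrightarrow> (\<forall>d\<in>D. (\<Sum>i\<in>S. x i) \<ge> u S d))}"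

definition instability ::
  "'d measure \<Rightarrow> nat \<Rightarrow> (nat set \<Rightarrow> 'd \<Rightarrow> real) \<Rightarrow> (nat \<Rightarrow> real) set \<Rightarrow> real" where
  "instability M N u C =
     measure M {d \<in> space M. \<exists>x\<in>C. \<exists>S. S \<subset> {1..N} \<and> (\<Sum>i\<in>S. x i) < u S d}"

text \<open>Cardinality of a minimal compression set of the algorithm
  \<open>A = scenario_core N u vN\<close> for the multi-sample \<open>\<omega> 0, \<dots>, \<omega> (K-1)\<close>.\<close>
definition min_compression_card ::
  "nat \<Rightarrow> (nat set \<Rightarrow> 'd \<Rightarrow> real) \<Rightarrow> real \<Rightarrow> nat \<Rightarrow> (nat \<Rightarrow> 'd) \<Rightarrow> nat" where
  "min_compression_card N u vN K \<omega> =
     Min {card I | I. I \<subseteq> \<omega> ` {..<K} \<and>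
                      scenario_core N u vN I = scenario_core N u vN (\<omega> ` {..<K})}"

end

theory Submission
  imports Defs
begin

text \<open>Let \<open>I\<close> index a minimal compression set of the multi-sample. If the scenario core is
  unstable beyond \<open>\<epsilon>(|I|)\<close>, then \<open>|I| < K\<close> because \<open>\<epsilon>(K) = 1\<close>, the core built from the samples
  in \<open>I\<close> is the scenario core itself, and hence none of the other \<open>K - |I|\<close> samples violates it.
  For a fixed \<open>I\<close>, conditioning on the samples in \<open>I\<close> (Fubini), the remaining independent samples
  all avoid a set of probability greater than \<open>\<epsilon>(|I|)\<close> with probability at most
  \<open>(1 - \<epsilon>(|I|))^(K-|I|)\<close>; a union bound over all \<open>I\<close> yields the sum defining \<open>\<beta>\<close>.
  The measure-theoretic content is that these events are measurable: whether some core point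
  gives a coalition less than \<open>r\<close> is decided by countably many rational vectors that satisfy
  the core constraints up to \<open>1/(n+1)\<close>, the converse direction being a compactness argument.\<close>

lemma le_of_forall_le_add_inverse_Suc:
  fixes a b :: real
  assumes "\<And>n::nat. a \<le> b + 1 / (real n + 1)"
  shows "a \<le> b"
proof (rule field_le_epsilon)
  fix e :: real assume "0 < e"
  then obtain n :: nat where "inverse (real (Suc n)) < e" using reals_Archimedean by blast
  then have "1 / (real n + 1) \<le> e" by (simp add: inverse_eq_divide add.commute)
  then show "a \<le> b + e" using assms[of n] by linarith
qed

lemma sum_diff_le_card_mult:
  fixes x q :: "nat \<Rightarrow> real"
  assumes "T \<subseteq> {1..N}" "\<And>i. i \<in> {1..N} \<Longrightarrow> \<bar>q i - x i\<bar> \<le> \<delta>"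
  shows "\<bar>(\<Sum>i\<in>T. q i) - (\<Sum>i\<in>T. x i)\<bar> \<le> real N * \<delta>"
proof -
  have fin: "finite T" using assms(1) finite_subset by blast
  have "\<bar>(\<Sum>i\<in>T. q i) - (\<Sum>i\<in>T. x i)\<bar> \<le> (\<Sum>i\<in>T. \<bar>q i - x i\<bar>)"
    by (metis sum_abs sum_subtractf)
  also have "\<dots> \<le> real (card T) * \<delta>" using assms by (intro sum_bounded_above) auto
  also have "\<dots> \<le> real N * \<delta>"
    using card_mono[OF _ assms(1)] assms(2)[of 1] fin
    by (cases "N = 0") (auto intro!: mult_right_mono)
  finally show ?thesis .
qed

lemma finite_proper_subsets: "finite A \<Longrightarrow> finite {T. T \<subset> A}"
  by (rule finite_subset[of _ "Pow A"]) auto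

lemma sum_subsets_card_less:
  fixes f :: "nat \<Rightarrow> real"
  shows "(\<Sum>I\<in>{I. I \<subseteq> {..<K} \<and> card I < K}. f (card I)) = (\<Sum>s=0..<K. real (K choose s) * f s)"
proof -
  have split: "{I. I \<subseteq> {..<K} \<and> card I < K} = (\<Union>s\<in>{0..<K}. {I. I \<subseteq> {..<K} \<and> card I = s})"
    by auto
  have fin: "finite {I. I \<subseteq> {..<K} \<and> card I = s}" for s
    by (rule finite_subset[of _ "Pow {..<K}"]) auto
  have "(\<Sum>I\<in>{I. I \<subseteq> {..<K} \<and> card I < K}. f (card I)) =
      (\<Sum>s=0..<K. \<Sum>I\<in>{I. I \<subseteq> {..<K} \<and> card I = s}. f (card I))"
    unfolding split by (rule sum.UNION_disjoint) (auto simp: fin)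
  also have "\<dots> = (\<Sum>s=0..<K. \<Sum>I\<in>{I. I \<subseteq> {..<K} \<and> card I = s}. f s)"
    by (intro sum.cong) auto
  finally show ?thesis by (simp add: n_subsets)
qed

section \<open>Rational approximation of scenario-core points\<close>

definition rat_vectors :: "nat \<Rightarrow> (nat \<Rightarrow> real) set" where
  "rat_vectors N = {q. (\<forall>i. q i \<in> \<rat>) \<and> (\<forall>i. i \<notin> {1..N} \<longrightarrow> q i = 0)}"

lemma countable_rat_vectors: "countable (rat_vectors N)"
proof -
  let ?ext = "\<lambda>f i. if i \<in> {1..N} then f i else 0"
  have "rat_vectors N \<subseteq> ?ext ` (PiE {1..N} (\<lambda>_. \<rat>))"
  proof
    fix q assume q: "q \<in> rat_vectors N"
    then have "q = ?ext (restrict q {1..N})" by (auto simp: rat_vectors_def)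
    moreover have "restrict q {1..N} \<in> PiE {1..N} (\<lambda>_. \<rat>)" using q by (auto simp: rat_vectors_def)
    ultimately show "q \<in> ?ext ` (PiE {1..N} (\<lambda>_. \<rat>))" by blast
  qed
  moreover have "countable (PiE {1..N} (\<lambda>_. \<rat>::real set))"
    by (intro countable_PiE) (auto simp: countable_rat)
  ultimately show ?thesis by (meson countable_image countable_subset)
qed

definition near_core_point ::
  "nat \<Rightarrow> (nat set \<Rightarrow> 'd \<Rightarrow> real) \<Rightarrow> real \<Rightarrow> 'd set \<Rightarrow> nat set \<Rightarrow> real \<Rightarrow> real \<Rightarrow> (nat \<Rightarrow> real) \<Rightarrow> bool"
  where
  "near_core_point N u vN D S r e q \<longleftrightarrow>
     \<bar>(\<Sum>i\<in>{1..N}. q i) - vN\<bar> \<le> e \<and>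
     (\<forall>T. T \<subset> {1..N} \<longrightarrow> (\<forall>d\<in>D. u T d \<le> (\<Sum>i\<in>T. q i) + e)) \<and>
     (\<Sum>i\<in>S. q i) \<le> r"

lemma near_core_point_mono:
  "near_core_point N u vN D S r e q \<Longrightarrow> e \<le> e' \<Longrightarrow> near_core_point N u vN D S r e' q"
  unfolding near_core_point_def by (meson add_left_mono order_trans)

lemma closed_near_core_points: "closed {q. near_core_point N u vN D S r e q}"
  unfolding near_core_point_def Ball_def
  by (intro closed_Collect_conj closed_Collect_all closed_Collect_imp closed_Collect_le
        open_Collect_const continuous_intros ballI) auto

lemma near_core_point_restrict:
  assumes "S \<subseteq> {1..N}"
  shows "near_core_point N u vN D S r e (\<lambda>i. if i \<in> {1..N} then q i else 0) =
         near_core_point N u vN D S r e q"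
proof -
  have "(\<Sum>i\<in>T. if i \<in> {1..N} then q i else 0) = (\<Sum>i\<in>T. q i)" if "T \<subseteq> {1..N}" for T
    using that by (intro sum.cong) auto
  then show ?thesis using assms unfolding near_core_point_def by (auto simp: psubset_imp_subset)
qed

lemma ex_rat_near_core_point:
  assumes x: "x \<in> scenario_core N u vN D" and S: "S \<subseteq> {1..N}"
    and r: "(\<Sum>i\<in>S. x i) < r" and e: "0 < e"
  shows "\<exists>q\<in>rat_vectors N. near_core_point N u vN D S r e q"
proof -
  define \<eta> where "\<eta> = min e (r - (\<Sum>i\<in>S. x i))"
  define \<delta> where "\<delta> = \<eta> / (real N + 1)"
  have \<eta>: "0 < \<eta>" "\<eta> \<le> e" "\<eta> \<le> r - (\<Sum>i\<in>S. x i)" using r e by (auto simp: \<eta>_def)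
  have \<delta>: "0 < \<delta>" "real N * \<delta> < \<eta>"
    using \<eta>(1) unfolding \<delta>_def by (simp_all add: field_simps)
  have "\<exists>g\<in>\<rat>. x i - \<delta> < g \<and> g < x i + \<delta>" for i
    using \<delta>(1) by (intro Rats_dense_in_real) simp
  then obtain g where g: "\<And>i. g i \<in> \<rat>" "\<And>i. \<bar>g i - x i\<bar> < \<delta>"
    unfolding abs_diff_less_iff by metis
  define q where "q i = (if i \<in> {1..N} then g i else 0)" for i
  have q: "q \<in> rat_vectors N" using g(1) by (auto simp: rat_vectors_def q_def)
  have qx: "\<bar>q i - x i\<bar> \<le> \<delta>" if "i \<in> {1..N}" for i
    using g(2)[of i] that by (simp add: q_def)
  have close: "\<bar>(\<Sum>i\<in>T. q i) - (\<Sum>i\<in>T. x i)\<bar> < \<eta>" if "T \<subseteq> {1..N}" for T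
  proof -
    have "\<bar>(\<Sum>i\<in>T. q i) - (\<Sum>i\<in>T. x i)\<bar> \<le> real N * \<delta>"
      using that qx by (rule sum_diff_le_card_mult)
    with \<delta>(2) show ?thesis by linarith
  qed
  have x_core: "(\<Sum>i\<in>{1..N}. x i) = vN" "\<And>T d. T \<subset> {1..N} \<Longrightarrow> d \<in> D \<Longrightarrow> u T d \<le> (\<Sum>i\<in>T. x i)"
    using x unfolding scenario_core_def by auto
  have "near_core_point N u vN D S r e q"
    unfolding near_core_point_def
  proof (intro conjI allI impI ballI)
    show "\<bar>(\<Sum>i\<in>{1..N}. q i) - vN\<bar> \<le> e" using close[of "{1..N}"] x_core(1) \<eta>(2) by simp
    show "(\<Sum>i\<in>S. q i) \<le> r" using close[OF S] \<eta>(3) unfolding abs_less_iff by linarith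
    fix T d assume T: "T \<subset> {1..N}" and d: "d \<in> D"
    have "\<bar>(\<Sum>i\<in>T. q i) - (\<Sum>i\<in>T. x i)\<bar> < \<eta>" using T by (intro close) blast
    then show "u T d \<le> (\<Sum>i\<in>T. q i) + e"
      using x_core(2)[OF T d] \<eta>(2) unfolding abs_less_iff by linarith
  qed
  with q show ?thesis by blast
qed

lemma near_core_point_bounds:
  assumes near: "near_core_point N u vN D S r e q" and d: "d \<in> D" and e: "e \<le> 1"
    and i: "i \<in> {1..N}"
  shows "q i \<in> {min (u {i} d) vN - 1 .. vN + 2 - u ({1..N} - {i}) d}"
proof -
  have total: "\<bar>(\<Sum>j\<in>{1..N}. q j) - vN\<bar> \<le> e"
    and coal: "\<And>T. T \<subset> {1..N} \<Longrightarrow> u T d \<le> (\<Sum>j\<in>T. q j) + e"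
    using near d unfolding near_core_point_def by auto
  have split: "(\<Sum>j\<in>{1..N}. q j) = q i + (\<Sum>j\<in>{1..N} - {i}. q j)"
    using i by (intro sum.remove) auto
  have "u ({1..N} - {i}) d \<le> (\<Sum>j\<in>{1..N} - {i}. q j) + e"
    using i by (intro coal) blast
  then have upper: "q i \<le> vN + 2 - u ({1..N} - {i}) d" using split total e by linarith
  have lower: "min (u {i} d) vN - 1 \<le> q i"
  proof (cases "{i} \<subset> {1..N}")
    case True
    then show ?thesis using coal[OF True] e by simp
  next
    case False
    then have "{1..N} = {i}" using i by blast
    then have "vN - 1 \<le> q i" using total e by (simp add: abs_le_iff)
    then show ?thesis using min.cobounded2[of "u {i} d" vN] by linarith
  qed
  from lower upper show ?thesis by simp
qed

lemma core_point_of_near_core_points: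
  assumes near: "\<And>n::nat. near_core_point N u vN D S r (1 / (real n + 1)) x"
  shows "x \<in> scenario_core N u vN D" "(\<Sum>i\<in>S. x i) \<le> r"
proof -
  have total: "(\<Sum>i\<in>{1..N}. x i) \<le> vN + 1 / (real n + 1)"
    "vN \<le> (\<Sum>i\<in>{1..N}. x i) + 1 / (real n + 1)" for n
    using near[of n] unfolding near_core_point_def abs_le_iff by linarith+
  have "(\<Sum>i\<in>{1..N}. x i) \<le> vN" "vN \<le> (\<Sum>i\<in>{1..N}. x i)"
    using le_of_forall_le_add_inverse_Suc[OF total(1)] le_of_forall_le_add_inverse_Suc[OF total(2)] .
  moreover have "u T d \<le> (\<Sum>i\<in>T. x i)" if "T \<subset> {1..N}" "d \<in> D" for T d
  proof (rule le_of_forall_le_add_inverse_Suc)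
    fix n show "u T d \<le> (\<Sum>i\<in>T. x i) + 1 / (real n + 1)"
      using near[of n] that unfolding near_core_point_def by simp
  qed
  ultimately show "x \<in> scenario_core N u vN D" unfolding scenario_core_def by simp
  show "(\<Sum>i\<in>S. x i) \<le> r" using near[of 0] unfolding near_core_point_def by simp
qed

lemma ex_core_point_of_near_core_points:
  assumes d: "d \<in> D" and S: "S \<subseteq> {1..N}"
    and near: "\<And>n::nat. \<exists>q. near_core_point N u vN D S r (1 / (real n + 1)) q"
  shows "\<exists>x\<in>scenario_core N u vN D. (\<Sum>i\<in>S. x i) \<le> r"
proof -
  \<comment> \<open>Zeroed outside \<open>{1..N}\<close>, near core points lie in a compact box; the closed sets of
    near core points for the tolerances \<open>1/(n+1)\<close> are nested, so they meet the box in common.\<close>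
  define box where "box = PiE UNIV (\<lambda>i. if i \<in> {1..N}
     then {min (u {i} d) vN - 1 .. vN + 2 - u ({1..N} - {i}) d} else {0::real})"
  define F where "F n = {q. near_core_point N u vN D S r (1 / (real n + 1)) q}" for n :: nat
  have "compactin (product_topology (\<lambda>_. euclidean) UNIV) box"
    unfolding box_def by (subst compactin_PiE) auto
  then have "compact box" by (simp add: euclidean_product_topology)
  moreover have "\<And>n. closed (F n)" unfolding F_def by (rule closed_near_core_points)
  moreover have "box \<inter> (\<Inter>n\<in>I. F n) \<noteq> {}" if "finite I" for I
  proof -
    define m where "m = Max (insert 0 I)"
    obtain q where q: "near_core_point N u vN D S r (1 / (real m + 1)) q" using near by blast
    define q' where "q' i = (if i \<in> {1..N} then q i else 0)" for i
    have q': "near_core_point N u vN D S r (1 / (real m + 1)) q'"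
      using q near_core_point_restrict[OF S] unfolding q'_def by metis
    have "q' \<in> box"
      using near_core_point_bounds[OF q' d] unfolding box_def PiE_UNIV_domain
      by (auto simp: q'_def)
    moreover have "q' \<in> F n" if "n \<in> I" for n
    proof -
      have "n \<le> m" using \<open>finite I\<close> that by (simp add: m_def)
      then have "1 / (real m + 1) \<le> 1 / (real n + 1)" by (simp add: frac_le)
      then show ?thesis unfolding F_def using near_core_point_mono[OF q'] by blast
    qed
    ultimately show ?thesis by blast
  qed
  ultimately have "box \<inter> (\<Inter>n. F n) \<noteq> {}" by (rule compact_imp_fip_image)
  then obtain x where "\<And>n. near_core_point N u vN D S r (1 / (real n + 1)) x"
    unfolding F_def by blast
  from core_point_of_near_core_points[OF this] show ?thesis by blast
qed

lemma ex_core_point_less_iff: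
  assumes "D \<noteq> {}" and S: "S \<subseteq> {1..N}"
  shows "(\<exists>x\<in>scenario_core N u vN D. (\<Sum>i\<in>S. x i) < r) \<longleftrightarrow>
    (\<exists>r'\<in>\<rat> \<inter> {..<r}. \<forall>n::nat. \<exists>q\<in>rat_vectors N. near_core_point N u vN D S r' (1 / (real n + 1)) q)"
proof
  assume "\<exists>x\<in>scenario_core N u vN D. (\<Sum>i\<in>S. x i) < r"
  then obtain x r' where x: "x \<in> scenario_core N u vN D" "(\<Sum>i\<in>S. x i) < r'" "r' \<in> \<rat>" "r' < r"
    by (meson Rats_dense_in_real)
  have "\<forall>n::nat. \<exists>q\<in>rat_vectors N. near_core_point N u vN D S r' (1 / (real n + 1)) q"
    using ex_rat_near_core_point[OF x(1) S x(2)] by simp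
  with x(3,4) show "\<exists>r'\<in>\<rat> \<inter> {..<r}. \<forall>n::nat. \<exists>q\<in>rat_vectors N. near_core_point N u vN D S r' (1 / (real n + 1)) q"
    by blast
next
  assume "\<exists>r'\<in>\<rat> \<inter> {..<r}. \<forall>n::nat. \<exists>q\<in>rat_vectors N. near_core_point N u vN D S r' (1 / (real n + 1)) q"
  then obtain r' where r': "r' < r" "\<And>n::nat. \<exists>q. near_core_point N u vN D S r' (1 / (real n + 1)) q"
    by blast
  obtain d where "d \<in> D" using \<open>D \<noteq> {}\<close> by blast
  from ex_core_point_of_near_core_points[OF this S r'(2)] r'(1)
  show "\<exists>x\<in>scenario_core N u vN D. (\<Sum>i\<in>S. x i) < r" by force
qed

section \<open>Measurability of the events\<close>

lemma near_core_point_image: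
  "near_core_point N u vN (\<omega> ` I) S r e q \<longleftrightarrow>
     (\<bar>(\<Sum>i\<in>{1..N}. q i) - vN\<bar> \<le> e \<and> (\<Sum>i\<in>S. q i) \<le> r) \<and>
     (\<forall>T\<in>{T. T \<subset> {1..N}}. \<forall>k\<in>I. u T (\<omega> k) \<le> (\<Sum>i\<in>T. q i) + e)"
  unfolding near_core_point_def Ball_def mem_Collect_eq image_iff
  by (intro iffI conjI; elim conjE; blast)

lemma sets_near_core_point:
  fixes K :: nat
  assumes meas_u: "\<And>T. u T \<in> borel_measurable M" and I: "I \<subseteq> {..<K}"
  shows "{\<omega> \<in> space (PiM {..<K} (\<lambda>_. M)). near_core_point N u vN (\<omega> ` I) S r e q}
    \<in> sets (PiM {..<K} (\<lambda>_. M))"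
proof -
  let ?P = "PiM {..<K} (\<lambda>_. M)"
  have fin: "finite I" "finite {T. T \<subset> {1..N}}"
    using finite_subset[OF I] finite_proper_subsets[of "{1..N}"] by auto
  have "Measurable.pred ?P (\<lambda>\<omega>. u T (\<omega> k) \<le> c)" if "k \<in> I" for T k c
  proof -
    have "(\<lambda>\<omega>. u T (\<omega> k)) \<in> borel_measurable ?P"
      using measurable_comp[OF measurable_component_singleton[of k "{..<K}" "\<lambda>_. M"] meas_u] that I
      by (auto simp: comp_def)
    then show ?thesis unfolding pred_def by (rule borel_measurable_le[OF _ borel_measurable_const])
  qed
  then have coalitions: "Measurable.pred ?P (\<lambda>\<omega>. \<forall>T\<in>{T. T \<subset> {1..N}}. \<forall>k\<in>I. u T (\<omega> k) \<le> (\<Sum>i\<in>T. q i) + e)"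
    by (intro pred_intros_finite(3)[OF fin(2)] pred_intros_finite(3)[OF fin(1)])
  have "Measurable.pred ?P (\<lambda>\<omega>. (\<bar>(\<Sum>i\<in>{1..N}. q i) - vN\<bar> \<le> e \<and> (\<Sum>i\<in>S. q i) \<le> r) \<and>
      (\<forall>T\<in>{T. T \<subset> {1..N}}. \<forall>k\<in>I. u T (\<omega> k) \<le> (\<Sum>i\<in>T. q i) + e))"
    by (rule pred_intros_logic(3)[OF _ coalitions]) (simp add: pred_def)
  then show ?thesis unfolding pred_def near_core_point_image .
qed

lemma sets_ex_core_point_less:
  fixes K :: nat
  assumes meas_u: "\<And>T. u T \<in> borel_measurable M" and I: "I \<subseteq> {..<K}" and S: "S \<subseteq> {1..N}"
  shows "{\<omega> \<in> space (PiM {..<K} (\<lambda>_. M)). \<exists>x\<in>scenario_core N u vN (\<omega> ` I). (\<Sum>i\<in>S. x i) < r}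
    \<in> sets (PiM {..<K} (\<lambda>_. M))"
proof (cases "I = {}")
  case True
  then show ?thesis by simp
next
  case False
  let ?P = "PiM {..<K} (\<lambda>_. M)"
  let ?approx = "\<lambda>\<omega> r' n q. near_core_point N u vN (\<omega> ` I) S r' (1 / (real n + 1)) q"
  have "countable (\<rat> \<inter> {..<r})" using countable_rat by (rule countable_subset[rotated]) auto
  then have "{\<omega> \<in> space ?P. \<exists>r'\<in>\<rat> \<inter> {..<r}. \<forall>n. \<exists>q\<in>rat_vectors N. ?approx \<omega> r' n q} \<in> sets ?P"
    by (intro sets.sets_Collect_countable_Ex' sets.sets_Collect_countable_All
        sets.sets_Collect_countable_Ex'[OF _ countable_rat_vectors] sets_near_core_point[OF meas_u I])
  moreover have "(\<exists>x\<in>scenario_core N u vN (\<omega> ` I). (\<Sum>i\<in>S. x i) < r) \<longleftrightarrow>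
      (\<exists>r'\<in>\<rat> \<inter> {..<r}. \<forall>n. \<exists>q\<in>rat_vectors N. ?approx \<omega> r' n q)" for \<omega>
    using False by (intro ex_core_point_less_iff S) simp
  ultimately show ?thesis by simp
qed

definition violation_set ::
  "'d measure \<Rightarrow> nat \<Rightarrow> (nat set \<Rightarrow> 'd \<Rightarrow> real) \<Rightarrow> (nat \<Rightarrow> real) set \<Rightarrow> 'd set" where
  "violation_set M N u C = {d \<in> space M. \<exists>x\<in>C. \<exists>S. S \<subset> {1..N} \<and> (\<Sum>i\<in>S. x i) < u S d}"

lemma instability_eq_measure_violation_set:
  "instability M N u C = measure M (violation_set M N u C)"
  unfolding instability_def violation_set_def ..

lemma violation_set_rat:
  "violation_set M N u C = {d \<in> space M. \<exists>S\<in>{S. S \<subset> {1..N}}. \<exists>r\<in>\<rat>.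
      (\<exists>x\<in>C. (\<Sum>i\<in>S. x i) < r) \<and> r < u S d}"
proof -
  have "(\<exists>x\<in>C. (\<Sum>i\<in>S. x i) < u S d) \<longleftrightarrow> (\<exists>r\<in>\<rat>. (\<exists>x\<in>C. (\<Sum>i\<in>S. x i) < r) \<and> r < u S d)"
    for S d
    by (meson Rats_dense_in_real order.strict_trans)
  moreover have "(\<exists>x\<in>C. \<exists>S. S \<subset> {1..N} \<and> (\<Sum>i\<in>S. x i) < u S d) \<longleftrightarrow>
      (\<exists>S\<in>{S. S \<subset> {1..N}}. \<exists>x\<in>C. (\<Sum>i\<in>S. x i) < u S d)" for d
    by blast
  ultimately show ?thesis unfolding violation_set_def by simp
qed

lemma sets_violation_set:
  assumes "\<And>T. u T \<in> borel_measurable M"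
  shows "violation_set M N u C \<in> sets M"
proof -
  have "{d \<in> space M. (\<exists>x\<in>C. (\<Sum>i\<in>S. x i) < r) \<and> r < u S d} \<in> sets M" for S r
    using borel_measurable_less[OF borel_measurable_const assms, of r S]
    by (cases "\<exists>x\<in>C. (\<Sum>i\<in>S. x i) < r") auto
  then show ?thesis unfolding violation_set_rat
    by (intro sets.sets_Collect_countable_Ex' countable_finite finite_proper_subsets countable_rat) auto
qed

lemma sets_core_violations:
  fixes K :: nat
  assumes meas_u: "\<And>T. u T \<in> borel_measurable M" and I: "I \<subseteq> {..<K}"
  shows "{p \<in> space (PiM {..<K} (\<lambda>_. M) \<Otimes>\<^sub>M M).
      snd p \<in> violation_set M N u (scenario_core N u vN (fst p ` I))} \<in> sets (PiM {..<K} (\<lambda>_. M) \<Otimes>\<^sub>M M)"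
proof -
  let ?P = "PiM {..<K} (\<lambda>_. M)"
  define Y where "Y S r = {\<omega> \<in> space ?P. \<exists>x\<in>scenario_core N u vN (\<omega> ` I). (\<Sum>i\<in>S. x i) < r}"
    for S r
  have "{p \<in> space (?P \<Otimes>\<^sub>M M). fst p \<in> Y S r \<and> r < u S (snd p)} \<in> sets (?P \<Otimes>\<^sub>M M)"
    if "S \<subset> {1..N}" for S r
  proof -
    have [measurable]: "Y S r \<in> sets ?P" "u S \<in> borel_measurable M"
      unfolding Y_def using that by (auto intro!: sets_ex_core_point_less meas_u I)
    have "Measurable.pred (?P \<Otimes>\<^sub>M M) (\<lambda>p. fst p \<in> Y S r \<and> r < u S (snd p))" by measurable
    then show ?thesis unfolding pred_def .
  qed
  then have "{p \<in> space (?P \<Otimes>\<^sub>M M). \<exists>S\<in>{S. S \<subset> {1..N}}. \<exists>r\<in>\<rat>. fst p \<in> Y S r \<and> r < u S (snd p)}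
      \<in> sets (?P \<Otimes>\<^sub>M M)"
    by (intro sets.sets_Collect_countable_Ex' countable_finite finite_proper_subsets countable_rat) auto
  moreover have "{p \<in> space (?P \<Otimes>\<^sub>M M). snd p \<in> violation_set M N u (scenario_core N u vN (fst p ` I))} =
      {p \<in> space (?P \<Otimes>\<^sub>M M). \<exists>S\<in>{S. S \<subset> {1..N}}. \<exists>r\<in>\<rat>. fst p \<in> Y S r \<and> r < u S (snd p)}"
  proof (intro Collect_cong conj_cong refl)
    fix p assume "p \<in> space (?P \<Otimes>\<^sub>M M)"
    then have "fst p \<in> space ?P" "snd p \<in> space M" by (auto simp: space_pair_measure)
    then show "snd p \<in> violation_set M N u (scenario_core N u vN (fst p ` I)) \<longleftrightarrow>
        (\<exists>S\<in>{S. S \<subset> {1..N}}. \<exists>r\<in>\<rat>. fst p \<in> Y S r \<and> r < u S (snd p))"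
      unfolding violation_set_rat Y_def by (simp only: mem_Collect_eq simp_thms)
  qed
  ultimately show ?thesis by (simp only:)
qed

definition consistent_unstable_event ::
  "'d measure \<Rightarrow> nat \<Rightarrow> (nat set \<Rightarrow> 'd \<Rightarrow> real) \<Rightarrow> real \<Rightarrow> nat \<Rightarrow> nat set \<Rightarrow> real \<Rightarrow> (nat \<Rightarrow> 'd) set"
  where
  "consistent_unstable_event M N u vN K I e =
     {\<omega> \<in> space (PiM {..<K} (\<lambda>_. M)).
        e < instability M N u (scenario_core N u vN (\<omega> ` I)) \<and>
        (\<forall>k\<in>{..<K} - I. \<omega> k \<notin> violation_set M N u (scenario_core N u vN (\<omega> ` I)))}"

lemma sets_consistent_unstable_event:
  fixes K :: nat
  assumes M: "sigma_finite_measure M" and meas_u: "\<And>T. u T \<in> borel_measurable M"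
    and I: "I \<subseteq> {..<K}"
  shows "consistent_unstable_event M N u vN K I e \<in> sets (PiM {..<K} (\<lambda>_. M))"
proof -
  interpret sigma_finite_measure M by (fact M)
  let ?P = "PiM {..<K} (\<lambda>_. M)"
  let ?C = "\<lambda>\<omega>. scenario_core N u vN (\<omega> ` I)"
  define R where "R = {p \<in> space (?P \<Otimes>\<^sub>M M). snd p \<in> violation_set M N u (?C (fst p))}"
  have R: "R \<in> sets (?P \<Otimes>\<^sub>M M)" unfolding R_def by (rule sets_core_violations[OF meas_u I])
  have slice: "Pair \<omega> -` R = violation_set M N u (?C \<omega>)" if "\<omega> \<in> space ?P" for \<omega>
    using that by (auto simp: R_def space_pair_measure violation_set_def)
  have [measurable]: "(\<lambda>\<omega>. enn2real (emeasure M (Pair \<omega> -` R))) \<in> borel_measurable ?P"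
    using measurable_emeasure_Pair[OF R] by measurable
  have [measurable]: "Measurable.pred ?P (\<lambda>\<omega>. (\<omega>, \<omega> k) \<in> R)" if "k < K" for k
    using that by (intro pred_sets2[OF R] measurable_Pair measurable_ident_sets measurable_component_singleton) auto
  have "Measurable.pred ?P (\<lambda>\<omega>. e < enn2real (emeasure M (Pair \<omega> -` R)) \<and> (\<forall>k\<in>{..<K} - I. (\<omega>, \<omega> k) \<notin> R))"
    by measurable
  moreover have "consistent_unstable_event M N u vN K I e =
      {\<omega> \<in> space ?P. e < enn2real (emeasure M (Pair \<omega> -` R)) \<and> (\<forall>k\<in>{..<K} - I. (\<omega>, \<omega> k) \<notin> R)}"
    unfolding consistent_unstable_event_def instability_eq_measure_violation_set measure_def
    using slice by (intro Collect_cong) auto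
  ultimately show ?thesis unfolding pred_def by simp
qed

section \<open>The probability bound\<close>

lemma emeasure_PiM_avoid:
  assumes M: "prob_space M" and J: "finite J" and B: "B \<in> sets M"
  shows "emeasure (PiM J (\<lambda>_. M)) (PiE J (\<lambda>_. space M - B)) = ennreal ((1 - measure M B) ^ card J)"
proof -
  interpret prob_space M by (fact M)
  interpret product_sigma_finite "\<lambda>_::'i. M"
    by (simp add: product_sigma_finite_def prob_space_imp_sigma_finite M)
  have "emeasure (PiM J (\<lambda>_. M)) (PiE J (\<lambda>_. space M - B)) = (\<Prod>k\<in>J. emeasure M (space M - B))"
    using J B by (simp add: emeasure_PiM)
  also have "\<dots> = (\<Prod>k\<in>J. ennreal (1 - measure M B))"
    using prob_compl[OF B] B by (simp add: emeasure_eq_measure)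
  also have "\<dots> = ennreal ((1 - measure M B) ^ card J)"
    using prob_le_1[of B] by (simp add: ennreal_power)
  finally show ?thesis .
qed

lemma measure_consistent_unstable_event_le:
  fixes K :: nat
  assumes M: "prob_space M" and meas_u: "\<And>T. u T \<in> borel_measurable M"
    and I: "I \<subseteq> {..<K}" and e: "e \<le> 1"
  shows "measure (PiM {..<K} (\<lambda>_. M)) (consistent_unstable_event M N u vN K I e) \<le> (1 - e) ^ (K - card I)"
proof -
  interpret prob_space M by (fact M)
  interpret product_sigma_finite "\<lambda>_::nat. M"
    by (simp add: product_sigma_finite_def prob_space_imp_sigma_finite M)
  interpret PI: prob_space "PiM I (\<lambda>_. M)" by (rule prob_space_PiM) (rule M)
  interpret PK: prob_space "PiM {..<K} (\<lambda>_. M)" by (rule prob_space_PiM) (rule M)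
  let ?P = "PiM {..<K} (\<lambda>_. M)"
  let ?C = "\<lambda>\<omega>. scenario_core N u vN (\<omega> ` I)"
  define J where "J = {..<K} - I"
  define E where "E = consistent_unstable_event M N u vN K I e"
  define c where "c = (1 - e) ^ (K - card I)"
  have IJ: "I \<inter> J = {}" "I \<union> J = {..<K}" "finite J" using I by (auto simp: J_def)
  have card_J: "card J = K - card I"
    unfolding J_def using I by (simp add: card_Diff_subset finite_subset)
  have E: "E \<in> sets ?P"
    unfolding E_def by (rule sets_consistent_unstable_event[OF prob_space_imp_sigma_finite[OF M] meas_u I])
  \<comment> \<open>Given the samples \<open>x\<close> in \<open>I\<close>, the event requires the samples in \<open>J\<close> to avoid a
    set of probability greater than \<open>e\<close>.\<close>
  have section_le: "(\<integral>\<^sup>+ y. indicator E (merge I J (x, y)) \<partial>PiM J (\<lambda>_. M)) \<le> ennreal c"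
    if x: "x \<in> space (PiM I (\<lambda>_. M))" for x
  proof -
    define B where "B = violation_set M N u (?C x)"
    have B: "B \<in> sets M" unfolding B_def by (rule sets_violation_set[OF meas_u])
    define A where "A = (if e < measure M B then PiE J (\<lambda>_. space M - B) else {})"
    have "indicator E (merge I J (x, y)) = (indicator A y :: ennreal)"
      if y: "y \<in> space (PiM J (\<lambda>_. M))" for y
    proof -
      have "merge I J (x, y) \<in> space ?P"
        using measurable_space[OF measurable_merge, of "(x, y)" I "\<lambda>_. M" J] x y IJ(2)
        by (simp add: space_pair_measure)
      moreover have "merge I J (x, y) ` I = x ` I" "\<And>k. k \<in> J \<Longrightarrow> merge I J (x, y) k = y k"
        using IJ(1) by (auto simp: merge_def image_def)
      moreover have "y \<in> PiE J (\<lambda>_. space M)" using y by (simp add: space_PiM)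
      ultimately have "merge I J (x, y) \<in> E \<longleftrightarrow> y \<in> A"
        unfolding E_def consistent_unstable_event_def A_def B_def J_def instability_eq_measure_violation_set
        by (auto simp: PiE_iff violation_set_def)
      then show ?thesis by (simp add: indicator_def)
    qed
    then have "(\<integral>\<^sup>+ y. indicator E (merge I J (x, y)) \<partial>PiM J (\<lambda>_. M)) = (\<integral>\<^sup>+ y. indicator A y \<partial>PiM J (\<lambda>_. M))"
      by (rule nn_integral_cong)
    also have "\<dots> = emeasure (PiM J (\<lambda>_. M)) A"
      using B IJ(3) by (intro nn_integral_indicator) (auto simp: A_def intro!: sets_PiM_I_finite)
    also have "\<dots> \<le> ennreal c"
      using emeasure_PiM_avoid[OF M IJ(3) B] e prob_le_1[of B] unfolding A_def c_def card_J[symmetric]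
      by (auto intro!: ennreal_leI power_mono)
    finally show ?thesis .
  qed
  have "emeasure ?P E = (\<integral>\<^sup>+ \<omega>. indicator E \<omega> \<partial>PiM (I \<union> J) (\<lambda>_. M))"
    using E IJ(2) by simp
  also have "\<dots> = (\<integral>\<^sup>+ x. (\<integral>\<^sup>+ y. indicator E (merge I J (x, y)) \<partial>PiM J (\<lambda>_. M)) \<partial>PiM I (\<lambda>_. M))"
    using E IJ finite_subset[OF I] by (intro product_nn_integral_fold) auto
  also have "\<dots> \<le> (\<integral>\<^sup>+ x. ennreal c \<partial>PiM I (\<lambda>_. M))"
    by (rule nn_integral_mono) (rule section_le)
  also have "\<dots> = ennreal c"
    by (simp add: PI.emeasure_space_1)
  finally show ?thesis
    using PK.emeasure_eq_measure e unfolding E_def c_def by simp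
qed

lemma ex_min_compression_index_set:
  fixes K :: nat
  shows "\<exists>I\<subseteq>{..<K}. card I = min_compression_card N u vN K \<omega> \<and>
    scenario_core N u vN (\<omega> ` I) = scenario_core N u vN (\<omega> ` {..<K})"
proof -
  define D where "D = \<omega> ` {..<K}"
  define Cs where "Cs = {card I | I. I \<subseteq> D \<and> scenario_core N u vN I = scenario_core N u vN D}"
  have "finite Cs" unfolding Cs_def D_def by (rule finite_subset[of _ "card ` Pow (\<omega> ` {..<K})"]) auto
  moreover have "card D \<in> Cs" unfolding Cs_def by blast
  ultimately have "Min Cs \<in> Cs" by (intro Min_in) auto
  then obtain I' where I': "card I' = Min Cs" "I' \<subseteq> D" "scenario_core N u vN I' = scenario_core N u vN D"
    unfolding Cs_def by auto
  obtain I where I: "I \<subseteq> {..<K}" "inj_on \<omega> I" "I' = \<omega> ` I"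
    using I'(2) unfolding D_def subset_image_inj by blast
  have "card I = min_compression_card N u vN K \<omega>"
    using I I'(1) unfolding min_compression_card_def Cs_def D_def by (simp add: card_image)
  with I I'(3) show ?thesis unfolding D_def by blast
qed

lemma not_in_violation_set_scenario_core:
  "d \<in> D \<Longrightarrow> d \<notin> violation_set M N u (scenario_core N u vN D)"
  unfolding violation_set_def scenario_core_def by (auto simp: not_less)

lemma unstable_subset_consistent_unstable_events:
  fixes K :: nat and \<epsilon> :: "nat \<Rightarrow> real"
  assumes M: "prob_space M" and eps_K: "\<epsilon> K = 1"
  shows "{\<omega> \<in> space (PiM {..<K} (\<lambda>_. M)).
      instability M N u (scenario_core N u vN (\<omega> ` {..<K})) > \<epsilon> (min_compression_card N u vN K \<omega>)}
    \<subseteq> (\<Union>I\<in>{I. I \<subseteq> {..<K} \<and> card I < K}. consistent_unstable_event M N u vN K I (\<epsilon> (card I)))"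
proof
  fix \<omega> assume \<omega>: "\<omega> \<in> {\<omega> \<in> space (PiM {..<K} (\<lambda>_. M)).
      instability M N u (scenario_core N u vN (\<omega> ` {..<K})) > \<epsilon> (min_compression_card N u vN K \<omega>)}"
  obtain I where I: "I \<subseteq> {..<K}" "card I = min_compression_card N u vN K \<omega>"
    and core: "scenario_core N u vN (\<omega> ` I) = scenario_core N u vN (\<omega> ` {..<K})"
    using ex_min_compression_index_set by blast
  have unstable: "\<epsilon> (card I) < instability M N u (scenario_core N u vN (\<omega> ` I))"
    using \<omega> I(2) core by simp
  have "instability M N u (scenario_core N u vN (\<omega> ` I)) \<le> 1"
    unfolding instability_eq_measure_violation_set by (rule prob_space.prob_le_1[OF M])
  moreover have "card I \<le> K" using card_mono[OF _ I(1)] by simp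
  ultimately have "card I < K" using unstable eps_K by (cases "card I = K") auto
  moreover have "\<omega> k \<notin> violation_set M N u (scenario_core N u vN (\<omega> ` I))" if "k < K" for k
    unfolding core using that by (intro not_in_violation_set_scenario_core) simp
  ultimately show "\<omega> \<in> (\<Union>I\<in>{I. I \<subseteq> {..<K} \<and> card I < K}. consistent_unstable_event M N u vN K I (\<epsilon> (card I)))"
    using \<omega> I(1) unstable unfolding consistent_unstable_event_def by auto
qed

theorem theorem1:
  fixes M :: "'d measure" and N K :: nat and u :: "nat set \<Rightarrow> 'd \<Rightarrow> real"
    and vN :: real and \<beta> :: real and \<epsilon> :: "nat \<Rightarrow> real"
  assumes "prob_space M"
    and grand: "\<forall>d\<in>space M. u {1..N} d = vN"
    and meas_u: "\<forall>S. u S \<in> borel_measurable M"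
    and nonempty: "\<forall>\<omega>\<in>space (PiM {..<K} (\<lambda>_. M)). scenario_core N u vN (\<omega> ` {..<K}) \<noteq> {}"
    and beta: "0 < \<beta>" "\<beta> < 1"
    and eps_range: "\<forall>s\<in>{0..K}. 0 \<le> \<epsilon> s \<and> \<epsilon> s \<le> 1"
    and eps_K: "\<epsilon> K = 1"
    and eps_sum: "(\<Sum>s=0..<K. real (K choose s) * (1 - \<epsilon> s) ^ (K - s)) = \<beta>"
    and meas_event: "{\<omega> \<in> space (PiM {..<K} (\<lambda>_. M)).
        instability M N u (scenario_core N u vN (\<omega> ` {..<K}))
          > \<epsilon> (min_compression_card N u vN K \<omega>)} \<in> sets (PiM {..<K} (\<lambda>_. M))"
  shows "measure (PiM {..<K} (\<lambda>_. M))
      {\<omega> \<in> space (PiM {..<K} (\<lambda>_. M)).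
        instability M N u (scenario_core N u vN (\<omega> ` {..<K}))
          > \<epsilon> (min_compression_card N u vN K \<omega>)} \<le> \<beta>"
proof -
  note M = \<open>prob_space M\<close>
  let ?P = "PiM {..<K} (\<lambda>_. M)"
  define subsets where "subsets = {I. I \<subseteq> {..<K} \<and> card I < K}"
  define E where "E I = consistent_unstable_event M N u vN K I (\<epsilon> (card I))" for I
  interpret PK: prob_space ?P by (rule prob_space_PiM) (rule M)
  have fin: "finite subsets" unfolding subsets_def by (rule finite_subset[of _ "Pow {..<K}"]) auto
  have E: "E I \<in> sets ?P" if "I \<in> subsets" for I
    using that meas_u unfolding E_def subsets_def
    by (intro sets_consistent_unstable_event prob_space_imp_sigma_finite M) auto
  have "measure ?P {\<omega> \<in> space ?P. instability M N u (scenario_core N u vN (\<omega> ` {..<K}))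
      > \<epsilon> (min_compression_card N u vN K \<omega>)} \<le> measure ?P (\<Union>I\<in>subsets. E I)"
    using unstable_subset_consistent_unstable_events[where \<epsilon>=\<epsilon> and K=K, OF M eps_K] fin E
    unfolding E_def subsets_def by (intro PK.finite_measure_mono) auto
  also have "\<dots> \<le> (\<Sum>I\<in>subsets. measure ?P (E I))"
    by (rule measure_UNION_le[OF fin E])
  also have "\<dots> \<le> (\<Sum>I\<in>subsets. (1 - \<epsilon> (card I)) ^ (K - card I))"
    using meas_u eps_range unfolding E_def subsets_def
    by (intro sum_mono measure_consistent_unstable_event_le M) auto
  also have "\<dots> = \<beta>"
    unfolding subsets_def sum_subsets_card_less[where f = "\<lambda>s. (1 - \<epsilon> s) ^ (K - s)"] by (rule eps_sum)
  finally show ?thesis .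
qed

end
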